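(* Let $n\ge 3$ and $m\ge 1$ be integers, and let $Q_{n,1},\dots,Q_{n,m}$ be the partition of $\{0,1,\dots,m+1\}^n$ defined below. Then for every $1\le i<j\le m$, $Q_{n,i}$ and $Q_{n,j}$ are adjacent (the partition is internally adjacent).
   Context: Define $f:\{0,\dots,m+1\}^3\to\{1,\dots,m\}$ by: $f(x,y,z)=y$ if $0\le x\le m$, $1\le y\le m$, $z=0$; $f=x$ if $1\le x\le m$, $0\le y\le m$, $z=m+1$; $f=y$ if $x=0$, $1\le y\le m$, $1\le z\le m$; $f=x$ if $1\le x\le m$, $y=0$, $1\le z\le m$; $f=z$ if $1\le x\le m+1$, $1\le y\le m+1$, $1\le z\le m$; and $f=1$ at all remaining points. Let $f_3=f$ and for $n\ge4$: $f_n(x_1,\dots,x_n)=f_{n-1}(x_1,x_2,x_3,\dots,x_{n-1})$ if $0\le x_n\le m$, and $f_n(x_1,\dots,x_n)=f_{n-1}(m+1-x_2,x_1,x_3,\dots,x_{n-1})$ if $x_n=m+1$. Let $Q_{n,i}=\{x\in\{0,\dots,m+1\}^n: f_n(x)=i\}$. Two disjoint sets $P,Q\subset\mathbb{Z}^n$ are adjacent if there exist $p\in P$, $q\in Q$ and a unit vector $v$ parallel to a coordinate axis with $p+v=q$. *)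

theory Defs
  imports Main
begin

text \<open>Points of Z^n are represented as integer lists of length n;
  list position k (0-based) is the coordinate x_(k+1).\<close>

definition f3 :: "int \<Rightarrow> int \<Rightarrow> int \<Rightarrow> int \<Rightarrow> int" where
  "f3 m x y z =
    (if 0 \<le> x \<and> x \<le> m \<and> 1 \<le> y \<and> y \<le> m \<and> z = 0 then y
     else if 1 \<le> x \<and> x \<le> m \<and> 0 \<le> y \<and> y \<le> m \<and> z = m + 1 then x
     else if x = 0 \<and> 1 \<le> y \<and> y \<le> m \<and> 1 \<le> z \<and> z \<le> m then y
     else if 1 \<le> x \<and> x \<le> m \<and> y = 0 \<and> 1 \<le> z \<and> z \<le> m then x
     else if 1 \<le> x \<and> x \<le> m + 1 \<and> 1 \<le> y \<and> y \<le> m + 1 \<and> 1 \<le> z \<and> z \<le> m then z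
     else 1)"

fun fn :: "int \<Rightarrow> nat \<Rightarrow> int list \<Rightarrow> int" where
  "fn m n xs =
    (if n \<le> 3 then f3 m (xs ! 0) (xs ! 1) (xs ! 2)
     else if 0 \<le> xs ! (n - 1) \<and> xs ! (n - 1) \<le> m then fn m (n - 1) (take (n - 1) xs)
     else fn m (n - 1) ((m + 1 - xs ! 1) # xs ! 0 # take (n - 3) (drop 2 xs)))"

declare fn.simps [simp del]

definition grid :: "nat \<Rightarrow> int \<Rightarrow> int list set" where
  "grid n m = {xs. length xs = n \<and> (\<forall>k<n. 0 \<le> xs ! k \<and> xs ! k \<le> m + 1)}"

definition Qset :: "nat \<Rightarrow> int \<Rightarrow> int \<Rightarrow> int list set" where
  "Qset n m i = {xs \<in> grid n m. fn m n xs = i}"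

definition unit_step :: "int list \<Rightarrow> int list \<Rightarrow> bool" where
  "unit_step p q \<longleftrightarrow> (\<exists>k < length p. \<exists>s \<in> {1, -1}. q = p[k := p ! k + s])"

definition adjacent :: "int list set \<Rightarrow> int list set \<Rightarrow> bool" where
  "adjacent P Q \<longleftrightarrow> P \<inter> Q = {} \<and> (\<exists>p\<in>P. \<exists>q\<in>Q. unit_step p q)"

end

theory Submission
  imports Defs
begin

text \<open>The neighbouring points \<open>(0, i, j, 0, \<dots>, 0)\<close> and \<open>(1, i, j, 0, \<dots>, 0)\<close> lie in
  \<open>Q\<^sub>n\<^sub>,\<^sub>i\<close> and \<open>Q\<^sub>n\<^sub>,\<^sub>j\<close> respectively: trailing coordinates in \<open>{0..m}\<close> never trigger the
  twisted branch of \<open>f\<^sub>n\<close>, so it reduces to \<open>f\<^sub>3\<close>, which reads \<open>y\<close> on the face \<open>x = 0\<close>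
  and \<open>z\<close> just inside it.\<close>

lemma fn_eq_f3:
  assumes "length xs = n" and "3 \<le> n" and "\<forall>k\<in>{3..<n}. 0 \<le> xs ! k \<and> xs ! k \<le> m"
  shows "fn m n xs = f3 m (xs ! 0) (xs ! 1) (xs ! 2)"
  using assms
proof (induction n arbitrary: xs)
  case 0
  then show ?case by simp
next
  case (Suc n)
  show ?case
  proof (cases "Suc n \<le> 3")
    case True
    then show ?thesis by (subst fn.simps) simp
  next
    case False
    then have "0 \<le> xs ! n \<and> xs ! n \<le> m" using Suc.prems by auto
    with False have "fn m (Suc n) xs = fn m n (take n xs)"
      by (subst fn.simps) simp
    also have "\<dots> = f3 m (take n xs ! 0) (take n xs ! 1) (take n xs ! 2)"
      using Suc.prems False by (intro Suc.IH) auto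
    finally show ?thesis using False by simp
  qed
qed

lemma fn_pad_zeros:
  assumes "3 \<le> n" and "0 \<le> m"
  shows "fn m n ([x, y, z] @ replicate (n - 3) 0) = f3 m x y z"
  using assms by (subst fn_eq_f3) (auto simp: nth_append)

lemma pad_zeros_in_grid:
  assumes "3 \<le> n" and "0 \<le> m"
    and "0 \<le> x" "x \<le> m + 1" "0 \<le> y" "y \<le> m + 1" "0 \<le> z" "z \<le> m + 1"
  shows "[x, y, z] @ replicate (n - 3) 0 \<in> grid n m"
  using assms by (auto simp: grid_def nth_append nth_Cons split: nat.splits)

lemma f3_side_face:
  assumes "1 \<le> y" "y \<le> m" "1 \<le> z" "z \<le> m"
  shows "f3 m 0 y z = y"
  using assms by (simp add: f3_def)

lemma f3_interior:
  assumes "1 \<le> x" "x \<le> m + 1" "1 \<le> y" "y \<le> m + 1" "1 \<le> z" "z \<le> m"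
  shows "f3 m x y z = z"
  using assms by (simp add: f3_def)

lemma unit_step_Cons_succ: "unit_step (a # xs) ((a + 1) # xs)"
  unfolding unit_step_def by (intro exI[of _ 0] conjI bexI[of _ 1]) auto

lemma Qset_disjoint: "i \<noteq> j \<Longrightarrow> Qset n m i \<inter> Qset n m j = {}"
  by (auto simp: Qset_def)

theorem lemma5p3:
  fixes n :: nat and m i j :: int
  assumes "n \<ge> 3" and "m \<ge> 1" and "1 \<le> i" and "i < j" and "j \<le> m"
  shows "adjacent (Qset n m i) (Qset n m j)"
proof -
  define p where "p = [0, i, j] @ replicate (n - 3) 0"
  define q where "q = [1, i, j] @ replicate (n - 3) 0"
  have "p \<in> Qset n m i"
    using assms pad_zeros_in_grid[of n m 0 i j] fn_pad_zeros[of n m 0 i j] f3_side_face[of i m j]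
    by (simp add: Qset_def p_def)
  moreover have "q \<in> Qset n m j"
    using assms pad_zeros_in_grid[of n m 1 i j] fn_pad_zeros[of n m 1 i j] f3_interior[of 1 m i j]
    by (simp add: Qset_def q_def)
  moreover have "unit_step p q"
    using unit_step_Cons_succ[of 0] by (simp add: p_def q_def)
  ultimately show ?thesis
    using Qset_disjoint[of i j n m] \<open>i < j\<close> unfolding adjacent_def by auto
qed

end
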